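(* Let $R$ be a finite commutative local ring with $\mathrm{char}(R)=2^n$ for some integer $n\geq 3$. The following are equivalent: (1) $\Gamma(R)$ has genus exactly $1$; (2) $\Gamma(R)$ is connected and $4$-regular; (3) $R\cong\mathbb{Z}_{2^n}$.
   Context: All rings are finite, commutative, with nonzero identity. The involutory Cayley graph $\Gamma(R)$ is the simple graph with vertex set $R$ in which distinct $x,y$ are adjacent iff $(x-y)^2=1$. Genus means the orientable genus of a graph. *)

theory Defs
  imports Main
begin

definition is_ideal :: "'a::comm_ring_1 set \<Rightarrow> bool" where
  "is_ideal I \<longleftrightarrow> 0 \<in> I \<and> (\<forall>x\<in>I. \<forall>y\<in>I. x + y \<in> I) \<and> (\<forall>x\<in>I. - x \<in> I)
     \<and> (\<forall>r x. x \<in> I \<longrightarrow> r * x \<in> I)"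

definition maximal_ideal :: "'a::comm_ring_1 set \<Rightarrow> bool" where
  "maximal_ideal M \<longleftrightarrow> is_ideal M \<and> M \<noteq> UNIV \<and>
     (\<forall>J. is_ideal J \<and> M \<subseteq> J \<longrightarrow> J = M \<or> J = UNIV)"

definition local_ring :: "'a::comm_ring_1 itself \<Rightarrow> bool" where
  "local_ring _ \<longleftrightarrow> (\<exists>!M :: 'a set. maximal_ideal M)"

definition iso_to_Zmod :: "'a::comm_ring_1 itself \<Rightarrow> int \<Rightarrow> bool" where
  "iso_to_Zmod _ m \<longleftrightarrow> (\<exists>f :: 'a \<Rightarrow> int. bij_betw f UNIV {0..<m} \<and>
      (\<forall>x y. f (x + y) = (f x + f y) mod m) \<and>
      (\<forall>x y. f (x * y) = (f x * f y) mod m) \<and>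
      f 1 = 1 mod m)"

definition inv_cayley_adj :: "'a::comm_ring_1 \<Rightarrow> 'a \<Rightarrow> bool" where
  "inv_cayley_adj x y \<longleftrightarrow> x \<noteq> y \<and> (x - y)^2 = 1"

section \<open>Simple graphs given by a vertex set V and symmetric irreflexive adjacency E\<close>

definition darts :: "'v set \<Rightarrow> ('v \<Rightarrow> 'v \<Rightarrow> bool) \<Rightarrow> ('v \<times> 'v) set" where
  "darts V E = {(u, v). u \<in> V \<and> v \<in> V \<and> E u v}"

definition num_edges :: "'v set \<Rightarrow> ('v \<Rightarrow> 'v \<Rightarrow> bool) \<Rightarrow> nat" where
  "num_edges V E = card {{u, v} | u v. u \<in> V \<and> v \<in> V \<and> E u v}"

definition conn_rel :: "'v set \<Rightarrow> ('v \<Rightarrow> 'v \<Rightarrow> bool) \<Rightarrow> ('v \<times> 'v) set" where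
  "conn_rel V E = (darts V E)\<^sup>* \<inter> (V \<times> V)"

definition components :: "'v set \<Rightarrow> ('v \<Rightarrow> 'v \<Rightarrow> bool) \<Rightarrow> 'v set set" where
  "components V E = V // conn_rel V E"

definition graph_connected :: "'v set \<Rightarrow> ('v \<Rightarrow> 'v \<Rightarrow> bool) \<Rightarrow> bool" where
  "graph_connected V E \<longleftrightarrow> V \<noteq> {} \<and> (\<forall>x\<in>V. \<forall>y\<in>V. (x, y) \<in> (darts V E)\<^sup>*)"

definition regular :: "'v set \<Rightarrow> ('v \<Rightarrow> 'v \<Rightarrow> bool) \<Rightarrow> nat \<Rightarrow> bool" where
  "regular V E k \<longleftrightarrow> (\<forall>x\<in>V. card {y \<in> V. E x y} = k)"

text \<open>Rotation systems (combinatorial 2-cell embeddings in orientable surfaces):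
  a permutation of the darts that fixes the tail of each dart and acts as a single
  cycle on the darts leaving each vertex.\<close>
definition rotation_system :: "'v set \<Rightarrow> ('v \<Rightarrow> 'v \<Rightarrow> bool) \<Rightarrow> ('v \<times> 'v \<Rightarrow> 'v \<times> 'v) \<Rightarrow> bool" where
  "rotation_system V E \<sigma> \<longleftrightarrow> bij_betw \<sigma> (darts V E) (darts V E) \<and>
     (\<forall>d\<in>darts V E. fst (\<sigma> d) = fst d) \<and>
     (\<forall>d\<in>darts V E. \<forall>d'\<in>darts V E. fst d = fst d' \<longrightarrow> (\<exists>k. (\<sigma> ^^ k) d = d'))"

definition face_perm :: "('v \<times> 'v \<Rightarrow> 'v \<times> 'v) \<Rightarrow> 'v \<times> 'v \<Rightarrow> 'v \<times> 'v" where
  "face_perm \<sigma> d = \<sigma> (snd d, fst d)"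

definition faces :: "'v set \<Rightarrow> ('v \<Rightarrow> 'v \<Rightarrow> bool) \<Rightarrow> ('v \<times> 'v \<Rightarrow> 'v \<times> 'v) \<Rightarrow> ('v \<times> 'v) set set" where
  "faces V E \<sigma> = (\<lambda>d. {(face_perm \<sigma> ^^ k) d | k. True}) ` darts V E"

text \<open>Orientable genus of a finite simple graph: minimum over rotation systems of the
  genus given by Euler's formula, summed over components
  (V - E + F = 2c - 2g, with c the number of components; an isolated vertex
  contributes one face).\<close>
definition graph_genus :: "'v set \<Rightarrow> ('v \<Rightarrow> 'v \<Rightarrow> bool) \<Rightarrow> nat" where
  "graph_genus V E = (LEAST g :: nat. \<exists>\<sigma>. rotation_system V E \<sigma> \<and>
     2 * int g = 2 * int (card (components V E)) - int (card V) + int (num_edges V E)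
                 - int (card (faces V E \<sigma>)) - int (card {v \<in> V. \<forall>w\<in>V. \<not> E v w}))"

end

(*
  Gamma(R) is the Cayley graph of (R, +) with respect to the set S of involutions u^2 = 1.
  As 2 is nilpotent, no three involutions sum to 0 (that would force 2ab = -1), so Gamma(R) is
  triangle-free and every face of every rotation system has at least 4 darts.  The group
  {1, w, -1, -w}, w = 1 + 2^(n-1), acts freely on S by multiplication, so |S| = 4r and S can be
  listed as q_0, ..., q_(4r-1) with q_(i+2r) = -q_i; rotating the darts at every vertex in this
  order yields a rotation system all of whose faces have exactly 4r darts.  Euler's formula then
  squeezes the genus between c + |R|(r-1)/2 and c + |R|(r-1), c the number of components, so it
  is 1 iff Gamma(R) is connected and |S| = 4.  In that case S = {1, w, -1, -w} consists of
  integers and connectivity makes every element of R an integer, i.e. R = Z/2^n; conversely the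
  square roots of 1 in Z/2^n are exactly 1, w, -1, -w, since 2^n | k^2 - 1 forces
  2^(n-1) | k - 1 or 2^(n-1) | k + 1.
*)

theory Submission
  imports Defs
begin

section \<open>Orbits of a permutation of a finite set\<close>

definition forward_orbit :: "('b \<Rightarrow> 'b) \<Rightarrow> 'b \<Rightarrow> 'b set" where
  "forward_orbit p a = {(p ^^ k) a | k. True}"

lemma funpow_in_forward_orbit: "(p ^^ k) a \<in> forward_orbit p a"
  unfolding forward_orbit_def by blast

lemma self_in_forward_orbit: "a \<in> forward_orbit p a"
  using funpow_in_forward_orbit[where k = 0] by simp

lemma forward_orbit_trans:
  assumes "b \<in> forward_orbit p a" shows "forward_orbit p b \<subseteq> forward_orbit p a"
proof
  fix c assume "c \<in> forward_orbit p b"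
  with assms obtain j k where "b = (p ^^ j) a" "c = (p ^^ k) b" unfolding forward_orbit_def by blast
  then have "c = (p ^^ (k + j)) a" by (simp add: funpow_add)
  then show "c \<in> forward_orbit p a" unfolding forward_orbit_def by blast
qed

locale perm_on =
  fixes p :: "'b \<Rightarrow> 'b" and A :: "'b set"
  assumes finite: "finite A" and maps_to: "\<And>a. a \<in> A \<Longrightarrow> p a \<in> A" and inj: "inj_on p A"
begin

lemma funpow_in: "a \<in> A \<Longrightarrow> (p ^^ k) a \<in> A"
  by (induction k) (auto simp: maps_to)

lemma funpow_inj: "a \<in> A \<Longrightarrow> b \<in> A \<Longrightarrow> (p ^^ k) a = (p ^^ k) b \<Longrightarrow> a = b"
proof (induction k)
  case (Suc k)
  then show ?case using inj funpow_in by (auto simp: inj_on_def)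
qed simp

lemma forward_orbit_subset: "a \<in> A \<Longrightarrow> forward_orbit p a \<subseteq> A"
  unfolding forward_orbit_def using funpow_in by auto

lemma periodic: assumes "a \<in> A" obtains N where "N > 0" "(p ^^ N) a = a"
proof -
  let ?f = "\<lambda>k. (p ^^ k) a"
  have "\<not> inj_on ?f {0..card A}"
  proof
    assume "inj_on ?f {0..card A}"
    then have "card (?f ` {0..card A}) = card A + 1" by (simp add: card_image)
    moreover have "?f ` {0..card A} \<subseteq> A" using funpow_in assms by blast
    then have "card (?f ` {0..card A}) \<le> card A" by (rule card_mono[OF finite])
    ultimately show False by simp
  qed
  then obtain i j where "i \<noteq> j" "?f i = ?f j" unfolding inj_on_def by blast
  then obtain i j where "i < j" and ij: "?f i = ?f j"
    by (metis linorder_neqE_nat)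
  have "(p ^^ i) a = ?f (i + (j - i))" using ij \<open>i < j\<close> by simp
  also have "\<dots> = (p ^^ i) ((p ^^ (j - i)) a)" by (simp only: funpow_add comp_apply)
  finally have "a = (p ^^ (j - i)) a" by (rule funpow_inj[OF assms funpow_in[OF assms]])
  show thesis by (rule that[of "j - i"]) (use \<open>i < j\<close> \<open>a = _\<close>[symmetric] in simp_all)
qed

lemma forward_orbit_sym: assumes "a \<in> A" "b \<in> forward_orbit p a" shows "a \<in> forward_orbit p b"
proof -
  obtain j where j: "b = (p ^^ j) a" using assms(2) unfolding forward_orbit_def by auto
  obtain N where "N > 0" and N: "(p ^^ N) a = a" using periodic assms(1) by blast
  have "(p ^^ (N * j - j)) b = (p ^^ (N * j - j + j)) a"
    unfolding j by (simp only: funpow_add comp_apply)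
  also have "\<dots> = (p ^^ (N * j)) a" using \<open>N > 0\<close> by simp
  also have "\<dots> = a" using funpow_mod_eq[where f = p, OF N, of "N * j"] by simp
  finally have "(p ^^ (N * j - j)) b = a" .
  then show ?thesis using funpow_in_forward_orbit by metis
qed

lemma forward_orbits_disjoint:
  assumes "a \<in> A" "b \<in> A" "forward_orbit p a \<noteq> forward_orbit p b"
  shows "forward_orbit p a \<inter> forward_orbit p b = {}"
proof (rule ccontr)
  assume "forward_orbit p a \<inter> forward_orbit p b \<noteq> {}"
  then obtain c where c: "c \<in> forward_orbit p a" "c \<in> forward_orbit p b" by blast
  have "forward_orbit p c = forward_orbit p x" if "x \<in> A" "c \<in> forward_orbit p x" for x
    using forward_orbit_trans[OF that(2)] forward_orbit_trans[OF forward_orbit_sym[OF that]] by (rule antisym)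
  from this[OF assms(1) c(1)] this[OF assms(2) c(2)] assms(3) show False by simp
qed

lemma card_eq_sum_card_forward_orbits: "card A = (\<Sum>X \<in> forward_orbit p ` A. card X)"
proof -
  have "A = \<Union> (forward_orbit p ` A)"
  proof
    show "A \<subseteq> \<Union> (forward_orbit p ` A)" using self_in_forward_orbit by fast
    show "\<Union> (forward_orbit p ` A) \<subseteq> A" using forward_orbit_subset by fast
  qed
  also have "card \<dots> = (\<Sum>X \<in> forward_orbit p ` A. card X)"
  proof (rule card_Union_disjoint)
    show "pairwise disjnt (forward_orbit p ` A)"
      unfolding pairwise_def disjnt_def using forward_orbits_disjoint by auto
    show "finite X" if "X \<in> forward_orbit p ` A" for X
      using that forward_orbit_subset finite_subset[OF _ finite] by blast
  qed
  finally show ?thesis .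
qed

lemma card_forward_orbits_le:
  assumes "\<And>a. a \<in> A \<Longrightarrow> m \<le> card (forward_orbit p a)"
  shows "m * card (forward_orbit p ` A) \<le> card A"
proof -
  have "(\<Sum>X \<in> forward_orbit p ` A. m) \<le> (\<Sum>X \<in> forward_orbit p ` A. card X)"
    by (rule sum_mono) (use assms in auto)
  then show ?thesis unfolding card_eq_sum_card_forward_orbits by (simp add: mult.commute)
qed

lemma card_forward_orbits_eq:
  assumes "\<And>a. a \<in> A \<Longrightarrow> card (forward_orbit p a) = m"
  shows "m * card (forward_orbit p ` A) = card A"
proof -
  have "(\<Sum>X \<in> forward_orbit p ` A. card X) = (\<Sum>X \<in> forward_orbit p ` A. m)"
    by (rule sum.cong) (use assms in auto)
  then show ?thesis unfolding card_eq_sum_card_forward_orbits by (simp add: mult.commute)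
qed

end

section \<open>Edges, components and faces of a simple graph\<close>

lemma faces_eq_forward_orbits: "faces V E \<sigma> = forward_orbit (face_perm \<sigma>) ` darts V E"
  unfolding faces_def forward_orbit_def ..

lemma finite_darts: "finite V \<Longrightarrow> finite (darts V E)"
  by (rule finite_subset[of _ "V \<times> V"]) (auto simp: darts_def)

lemma two_mul_num_edges:
  assumes "finite V" and sym: "\<And>u v. E u v \<Longrightarrow> E v u" and irrefl: "\<And>v. \<not> E v v"
  shows "2 * num_edges V E = card (darts V E)"
proof -
  let ?D = "darts V E" and ?e = "\<lambda>d. {fst d, snd d}"
  have edges: "{{u, v} | u v. u \<in> V \<and> v \<in> V \<and> E u v} = ?e ` ?D"
  proof (intro equalityI subsetI)
    fix e assume "e \<in> {{u, v} | u v. u \<in> V \<and> v \<in> V \<and> E u v}"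
    then obtain u v where "(u, v) \<in> ?D" "e = ?e (u, v)" unfolding darts_def by auto
    then show "e \<in> ?e ` ?D" by blast
  qed (auto simp: darts_def, blast)
  have fiber: "card {d \<in> ?D. ?e d = e} = 2" if e: "e \<in> ?e ` ?D" for e
  proof -
    obtain u v where uv: "(u, v) \<in> ?D" "e = {u, v}" using e by force
    then have "{d \<in> ?D. ?e d = e} = {(u, v), (v, u)}"
      using sym unfolding darts_def by (auto simp: doubleton_eq_iff)
    moreover have "u \<noteq> v" using uv(1) irrefl unfolding darts_def by auto
    ultimately show ?thesis by simp
  qed
  have "card ?D = (\<Sum>e \<in> ?e ` ?D. card {d \<in> ?D. ?e d = e})"
    using sum.image_gen[OF finite_darts[OF \<open>finite V\<close>, of E], where h = "\<lambda>_. 1::nat" and g = ?e]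
    by (simp only: card_eq_sum)
  also have "\<dots> = 2 * card (?e ` ?D)" using fiber by simp
  finally show ?thesis unfolding num_edges_def edges by simp
qed

lemma card_components_eq_1_iff: "card (components V E) = 1 \<longleftrightarrow> graph_connected V E"
proof
  let ?r = "conn_rel V E"
  assume "card (components V E) = 1"
  then obtain X where X: "V // ?r = {X}" unfolding components_def by (auto simp: card_Suc_eq)
  then have "V \<noteq> {}" by auto
  moreover have "(x, y) \<in> (darts V E)\<^sup>*" if "x \<in> V" "y \<in> V" for x y
  proof -
    have "?r `` {x} \<in> V // ?r" "?r `` {y} \<in> V // ?r" using that by (auto intro: quotientI)
    then have "?r `` {x} = ?r `` {y}" using X by auto
    moreover have "y \<in> ?r `` {y}" using \<open>y \<in> V\<close> unfolding conn_rel_def by auto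
    ultimately show ?thesis unfolding conn_rel_def by auto
  qed
  ultimately show "graph_connected V E" unfolding graph_connected_def by blast
next
  assume conn: "graph_connected V E"
  then have "conn_rel V E `` {x} = V" if "x \<in> V" for x
    using that unfolding graph_connected_def conn_rel_def by auto
  then have "V // conn_rel V E = {V}"
    using conn unfolding quotient_def graph_connected_def by auto
  then show "card (components V E) = 1" unfolding components_def by simp
qed

lemma card_components_pos: "finite V \<Longrightarrow> V \<noteq> {} \<Longrightarrow> 0 < card (components V E)"
  unfolding components_def
  by (auto simp: card_gt_0_iff conn_rel_def intro: finite_quotient)

locale embedded_graph =
  fixes V :: "'v set" and E :: "'v \<Rightarrow> 'v \<Rightarrow> bool" and \<sigma> :: "'v \<times> 'v \<Rightarrow> 'v \<times> 'v"
  assumes finite_vertices: "finite V"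
    and sym: "\<And>u v. E u v \<Longrightarrow> E v u" and irrefl: "\<And>v. \<not> E v v"
    and is_rotation_system: "rotation_system V E \<sigma>"
begin

lemma swap_dart: "d \<in> darts V E \<Longrightarrow> prod.swap d \<in> darts V E"
  using sym unfolding darts_def by auto

lemma rotation_bij: "bij_betw \<sigma> (darts V E) (darts V E)"
  using is_rotation_system unfolding rotation_system_def by auto

sublocale face_orbits: perm_on "face_perm \<sigma>" "darts V E"
proof
  show "finite (darts V E)" using finite_vertices by (rule finite_darts)
  show "face_perm \<sigma> d \<in> darts V E" if "d \<in> darts V E" for d
    using swap_dart[OF that] rotation_bij unfolding face_perm_def by (simp add: bij_betw_apply prod.swap_def)
  show "inj_on (face_perm \<sigma>) (darts V E)"
  proof (rule inj_onI)
    fix d d' assume "d \<in> darts V E" "d' \<in> darts V E" "face_perm \<sigma> d = face_perm \<sigma> d'"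
    then have "prod.swap d = prod.swap d'"
      using swap_dart rotation_bij unfolding face_perm_def bij_betw_def inj_on_def prod.swap_def by blast
    then show "d = d'" by (metis swap_swap)
  qed
qed

lemma fst_face_perm: "d \<in> darts V E \<Longrightarrow> fst (face_perm \<sigma> d) = snd d"
  using is_rotation_system swap_dart unfolding rotation_system_def face_perm_def by (auto simp: prod.swap_def)

lemma face_perm_neq: "d \<in> darts V E \<Longrightarrow> face_perm \<sigma> d \<noteq> d"
  using fst_face_perm irrefl unfolding darts_def by fastforce

lemma face_perm_2_neq:
  assumes no_pendant: "\<And>v u. (v, u) \<in> darts V E \<Longrightarrow> \<exists>u'. u' \<noteq> u \<and> (v, u') \<in> darts V E"
    and d: "d \<in> darts V E"
  shows "face_perm \<sigma> (face_perm \<sigma> d) \<noteq> d"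
proof
  assume closed: "face_perm \<sigma> (face_perm \<sigma> d) = d"
  obtain u v where uv: "d = (u, v)" by fastforce
  have "fst (face_perm \<sigma> d) = v" "snd (face_perm \<sigma> d) = u"
    using fst_face_perm[OF face_orbits.maps_to[OF d]] fst_face_perm[OF d] closed uv by simp_all
  then have "\<sigma> (v, u) = (v, u)" unfolding face_perm_def uv by (metis prod.collapse fst_conv snd_conv)
  then have fixed: "(\<sigma> ^^ k) (v, u) = (v, u)" for k by (induction k) simp_all
  have "(v, u) \<in> darts V E" using swap_dart[OF d] uv by simp
  then obtain u' where "u' \<noteq> u" "(v, u') \<in> darts V E" using no_pendant by blast
  moreover obtain k where "(\<sigma> ^^ k) (v, u) = (v, u')"
    using is_rotation_system \<open>(v, u) \<in> darts V E\<close> \<open>(v, u') \<in> darts V E\<close>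
    unfolding rotation_system_def by fastforce
  ultimately show False using fixed by simp
qed

lemma face_perm_3_neq:
  assumes triangle_free:
      "\<And>u v w. (u, v) \<in> darts V E \<Longrightarrow> (v, w) \<in> darts V E \<Longrightarrow> (w, u) \<notin> darts V E"
    and d: "d \<in> darts V E"
  shows "face_perm \<sigma> (face_perm \<sigma> (face_perm \<sigma> d)) \<noteq> d"
proof
  assume closed: "face_perm \<sigma> (face_perm \<sigma> (face_perm \<sigma> d)) = d"
  let ?d1 = "face_perm \<sigma> d" and ?d2 = "face_perm \<sigma> (face_perm \<sigma> d)"
  have "?d1 \<in> darts V E" "?d2 \<in> darts V E" using face_orbits.maps_to d by blast+
  moreover have "fst ?d1 = snd d" "fst ?d2 = snd ?d1" "fst d = snd ?d2"
    using fst_face_perm \<open>?d1 \<in> darts V E\<close> \<open>?d2 \<in> darts V E\<close> d closed by metis+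
  ultimately show False using triangle_free[of "fst d" "snd d" "snd ?d1"] d
    by (metis prod.collapse)
qed

(* A face with 1, 2 or 3 darts would need a loop, a vertex of degree 1 (whose rotation fixes
   its only dart), or a triangle. *)
lemma four_mul_card_faces_le:
  assumes no_pendant: "\<And>v u. (v, u) \<in> darts V E \<Longrightarrow> \<exists>u'. u' \<noteq> u \<and> (v, u') \<in> darts V E"
    and triangle_free:
      "\<And>u v w. (u, v) \<in> darts V E \<Longrightarrow> (v, w) \<in> darts V E \<Longrightarrow> (w, u) \<notin> darts V E"
  shows "4 * card (faces V E \<sigma>) \<le> card (darts V E)"
  unfolding faces_eq_forward_orbits
proof (rule face_orbits.card_forward_orbits_le)
  fix d assume d: "d \<in> darts V E"
  let ?p = "face_perm \<sigma>"
  have "card {d, ?p d, ?p (?p d), ?p (?p (?p d))} = 4"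
    using face_perm_neq face_perm_2_neq[OF no_pendant] face_perm_3_neq[OF triangle_free]
      face_orbits.maps_to d
    by (simp add: eq_commute)
  moreover have "{d, ?p d, ?p (?p d), ?p (?p (?p d))} \<subseteq> forward_orbit ?p d"
    using funpow_in_forward_orbit[of 0 ?p d] funpow_in_forward_orbit[of 1 ?p d]
      funpow_in_forward_orbit[of 2 ?p d] funpow_in_forward_orbit[of 3 ?p d]
    by (simp add: numeral_eq_Suc)
  moreover have "finite (forward_orbit ?p d)"
    using face_orbits.forward_orbit_subset[OF d] face_orbits.finite by (rule finite_subset)
  ultimately show "4 \<le> card (forward_orbit ?p d)" by (metis card_mono)
qed

end

definition double_genus :: "'v set \<Rightarrow> ('v \<Rightarrow> 'v \<Rightarrow> bool) \<Rightarrow> ('v \<times> 'v \<Rightarrow> 'v \<times> 'v) \<Rightarrow> int" where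
  "double_genus V E \<sigma> = 2 * int (card (components V E)) - int (card V) + int (num_edges V E)
     - int (card (faces V E \<sigma>)) - int (card {v \<in> V. \<forall>w\<in>V. \<not> E v w})"

lemma graph_genus_eq_Least:
  "graph_genus V E = (LEAST g. \<exists>\<sigma>. rotation_system V E \<sigma> \<and> 2 * int g = double_genus V E \<sigma>)"
  unfolding graph_genus_def double_genus_def ..

lemma graph_genus_le:
  assumes "rotation_system V E \<sigma>" "double_genus V E \<sigma> = 2 * int g"
  shows "graph_genus V E \<le> g"
  unfolding graph_genus_eq_Least by (rule Least_le) (use assms in auto)

lemma graph_genus_ge:
  assumes "rotation_system V E \<sigma>\<^sub>0" "double_genus V E \<sigma>\<^sub>0 = 2 * int g\<^sub>0"
    and "\<And>\<sigma>. rotation_system V E \<sigma> \<Longrightarrow> L \<le> double_genus V E \<sigma>"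
  shows "L \<le> 2 * int (graph_genus V E)"
proof -
  have "\<exists>\<sigma>. rotation_system V E \<sigma> \<and> 2 * int (graph_genus V E) = double_genus V E \<sigma>"
    unfolding graph_genus_eq_Least by (rule LeastI[of _ g\<^sub>0]) (use assms(1,2) in auto)
  then show ?thesis using assms(3) by force
qed

section \<open>Cayley graphs of finite abelian groups\<close>

definition cayley_adj :: "'a::ab_group_add set \<Rightarrow> 'a \<Rightarrow> 'a \<Rightarrow> bool" where
  "cayley_adj S x y \<longleftrightarrow> y - x \<in> S"

lemma mem_darts_cayley [simp]: "(x, y) \<in> darts UNIV (cayley_adj S) \<longleftrightarrow> y - x \<in> S"
  unfolding darts_def cayley_adj_def by simp

lemma darts_cayley: "darts UNIV (cayley_adj S) = (\<lambda>(x, s). (x, x + s)) ` (UNIV \<times> S)"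
  by (force simp: image_iff)

lemma card_darts_cayley:
  fixes S :: "'a::{ab_group_add, finite} set"
  shows "card (darts UNIV (cayley_adj S)) = card (UNIV :: 'a set) * card S"
proof -
  have "inj_on (\<lambda>(x, s). (x, x + s)) (UNIV \<times> S)" by (auto simp: inj_on_def)
  then show ?thesis unfolding darts_cayley by (simp add: card_image card_cartesian_product)
qed

lemma regular_cayley_iff: "regular UNIV (cayley_adj S) k \<longleftrightarrow> card S = k"
proof -
  have "{y. cayley_adj S x y} = (+) x ` S" for x
    unfolding cayley_adj_def by (force simp: image_iff)
  then show ?thesis unfolding regular_def by (simp add: card_image)
qed

lemma cayley_connected_subgroup:
  assumes "graph_connected UNIV (cayley_adj S)"
    and "S \<subseteq> G" "0 \<in> G" "\<And>x y. x \<in> G \<Longrightarrow> y \<in> G \<Longrightarrow> x + y \<in> G"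
  shows "x \<in> G"
proof -
  have "(0, x) \<in> (darts UNIV (cayley_adj S))\<^sup>*"
    using assms(1) unfolding graph_connected_def by blast
  then show ?thesis
  proof (induction rule: rtrancl_induct)
    case (step y z)
    then have "z = y + (z - y)" "z - y \<in> G" using assms(2) by auto
    then show ?case using step.IH assms(4) by metis
  qed (rule assms(3))
qed

lemma cayley_connected_if_of_int_surj:
  assumes "surj (of_int :: int \<Rightarrow> 'a::comm_ring_1)" and "1 \<in> S" and "-1 \<in> S"
  shows "graph_connected UNIV (cayley_adj (S :: 'a set))"
proof -
  let ?D = "darts UNIV (cayley_adj S)"
  have "(x, x + of_int j) \<in> ?D\<^sup>*" for x :: 'a and j
  proof (induction j rule: int_induct[where k = 0])
    case (step1 i)
    have "(x + of_int i, x + of_int (i + 1)) \<in> ?D" using \<open>1 \<in> S\<close> by simp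
    with step1.IH show ?case by (rule rtrancl_into_rtrancl)
  next
    case (step2 i)
    have "(x + of_int i, x + of_int (i - 1)) \<in> ?D" using \<open>-1 \<in> S\<close> by simp
    with step2.IH show ?case by (rule rtrancl_into_rtrancl)
  qed simp
  moreover have "y = x + of_int (SOME j. y - x = of_int j)" for x y :: 'a
    using someI_ex[of "\<lambda>j. y - x = of_int j"] assms(1) by (metis diff_add_cancel add.commute surj_def)
  ultimately show ?thesis unfolding graph_connected_def by (metis UNIV_not_empty)
qed

locale antipodal_enumeration =
  fixes S :: "'a::{ab_group_add, finite} set" and q :: "nat \<Rightarrow> 'a" and r :: nat
  assumes r_pos: "0 < r"
    and bij: "bij_betw q {..<4 * r} S"
    and antipodal: "\<And>i. i < 2 * r \<Longrightarrow> q (i + 2 * r) = - q i"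
begin

lemma card_S: "card S = 4 * r"
  using bij_betw_same_card[OF bij] by simp

lemma q_in: "i < 4 * r \<Longrightarrow> q i \<in> S"
  using bij_betw_apply[OF bij] by simp

lemma q_inj: "i < 4 * r \<Longrightarrow> j < 4 * r \<Longrightarrow> q i = q j \<Longrightarrow> i = j"
  using bij_betw_imp_inj_on[OF bij] by (simp add: inj_on_def)

lemma uminus_q: "i < 4 * r \<Longrightarrow> - q i = q ((i + 2 * r) mod (4 * r))"
proof (cases "i < 2 * r")
  case True
  then show ?thesis using antipodal[of i] by simp
next
  case False
  moreover assume "i < 4 * r"
  ultimately have "(i + 2 * r) mod (4 * r) = i - 2 * r" "i = (i - 2 * r) + 2 * r" "i - 2 * r < 2 * r"
    by (simp_all add: mod_if)
  then show ?thesis using antipodal[of "i - 2 * r"] by simp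
qed

definition index :: "'a \<Rightarrow> nat" where
  "index = the_inv_into {..<4 * r} q"

lemma index_q: "i < 4 * r \<Longrightarrow> index (q i) = i"
  unfolding index_def using bij_betw_imp_inj_on[OF bij] by (simp add: the_inv_into_f_f)

lemma q_index: "s \<in> S \<Longrightarrow> index s < 4 * r \<and> q (index s) = s"
  using bij_betw_imp_surj_on[OF bij] index_q by force

definition rotation :: "'a \<times> 'a \<Rightarrow> 'a \<times> 'a" where
  "rotation = (\<lambda>(x, y). (x, x + q (Suc (index (y - x)) mod (4 * r))))"

lemma dart_cases:
  assumes "d \<in> darts UNIV (cayley_adj S)" obtains x i where "i < 4 * r" "d = (x, x + q i)"
proof -
  obtain x y where d: "d = (x, y)" by fastforce
  then have "y - x \<in> S" using assms by simp
  then show thesis using q_index that[of "index (y - x)" x] d by auto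
qed

lemma rotation_funpow: "i < 4 * r \<Longrightarrow> (rotation ^^ m) (x, x + q i) = (x, x + q ((i + m) mod (4 * r)))"
proof (induction m)
  case (Suc m)
  then show ?case by (simp add: rotation_def index_q mod_Suc_eq)
qed simp

lemma rotation_system: "rotation_system UNIV (cayley_adj S) rotation"
  unfolding rotation_system_def
proof (intro conjI ballI impI)
  let ?D = "darts UNIV (cayley_adj S)"
  have maps_to: "rotation d \<in> ?D" if "d \<in> ?D" for d
    using that by (auto elim!: dart_cases simp: rotation_def index_q q_in)
  have period: "(rotation ^^ (4 * r)) d = d" if "d \<in> ?D" for d
    using that by (auto elim!: dart_cases simp: rotation_funpow)
  have "(rotation ^^ (4 * r)) d = (rotation ^^ (4 * r - 1)) (rotation d)" for d
  proof -
    have "4 * r = Suc (4 * r - 1)" using r_pos by simp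
    then show ?thesis by (metis funpow_Suc_right comp_apply)
  qed
  with period have inj: "inj_on rotation ?D" by (intro inj_onI) metis
  then have "rotation ` ?D = ?D" using maps_to by (intro endo_inj_surj) auto
  with inj show "bij_betw rotation ?D ?D" unfolding bij_betw_def by simp
next
  show "fst (rotation d) = fst d" for d by (simp add: rotation_def case_prod_beta)
next
  fix d d' assume "d \<in> darts UNIV (cayley_adj S)" "d' \<in> darts UNIV (cayley_adj S)" "fst d = fst d'"
  then obtain x i j where "i < 4 * r" "j < 4 * r" "d = (x, x + q i)" "d' = (x, x + q j)"
    by (auto elim!: dart_cases)
  moreover have "(i + (j + 4 * r - i)) mod (4 * r) = j" using calculation(1,2) by simp
  ultimately show "\<exists>k. (rotation ^^ k) d = d'" using rotation_funpow by metis
qed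

(* The face through the dart x -> x + q i leaves its head along q (i + 2r + 1), since
   - q i = q (i + 2r).  As 2r + 1 is coprime to 4r, the face uses every step q j exactly once
   before closing up, and these steps sum to 0. *)
definition face_index :: "nat \<Rightarrow> nat \<Rightarrow> nat" where
  "face_index i j = (i + j * (2 * r + 1)) mod (4 * r)"

lemma face_index_less: "face_index i j < 4 * r"
  unfolding face_index_def using r_pos by simp

lemma face_perm_rotation:
  assumes "i < 4 * r"
  shows "face_perm rotation (x, x + q i) = (x + q i, x + q i + q ((i + 2 * r + 1) mod (4 * r)))"
proof -
  have "x - (x + q i) = q ((i + 2 * r) mod (4 * r))" using uminus_q[OF assms] by simp
  then show ?thesis
    unfolding face_perm_def rotation_def using r_pos by (simp add: index_q mod_Suc_eq)
qed

lemma face_perm_funpow: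
  assumes "i < 4 * r"
  shows "(face_perm rotation ^^ j) (x, x + q i) =
    (x + (\<Sum>l<j. q (face_index i l)), x + (\<Sum>l<j. q (face_index i l)) + q (face_index i j))"
proof (induction j)
  case 0
  then show ?case using assms by (simp add: face_index_def)
next
  case (Suc j)
  have "(face_index i j + 2 * r + 1) mod (4 * r) = ((i + j * (2 * r + 1)) mod (4 * r) + (2 * r + 1)) mod (4 * r)"
    unfolding face_index_def by (simp only: add.assoc)
  also have "\<dots> = (i + j * (2 * r + 1) + (2 * r + 1)) mod (4 * r)"
    by (rule mod_add_left_eq)
  also have "i + j * (2 * r + 1) + (2 * r + 1) = i + Suc j * (2 * r + 1)" by simp
  finally have "(face_index i j + 2 * r + 1) mod (4 * r) = face_index i (Suc j)"
    unfolding face_index_def .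
  moreover define y where "y = x + (\<Sum>l<j. q (face_index i l))"
  ultimately have "(face_perm rotation ^^ Suc j) (x, x + q i) =
      (y + q (face_index i j), y + q (face_index i j) + q (face_index i (Suc j)))"
    using Suc face_perm_rotation[OF face_index_less, of y i j] by simp
  then show ?case unfolding y_def by (simp add: add.assoc)
qed

lemma sum_face_index: "(\<Sum>l<4 * r. q (face_index i l)) = 0"
proof -
  have split: "(\<Sum>l<m + n. f l) = (\<Sum>l<m. f l) + (\<Sum>l<n. f (m + l))" for f :: "nat \<Rightarrow> 'a" and m n
    by (induction n) (simp_all add: add.assoc)
  have "face_index i (2 * r + l) = (face_index i l + 2 * r) mod (4 * r)" for l
  proof -
    have "i + (2 * r + l) * (2 * r + 1) = (i + l * (2 * r + 1) + 2 * r) + r * (4 * r)"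
      by (simp add: algebra_simps)
    then have "face_index i (2 * r + l) = (i + l * (2 * r + 1) + 2 * r) mod (4 * r)"
      unfolding face_index_def by (simp only: mod_mult_self1)
    then show ?thesis unfolding face_index_def by (simp only: mod_add_left_eq)
  qed
  then have "q (face_index i (2 * r + l)) = - q (face_index i l)" for l
    using uminus_q[OF face_index_less] by simp
  then show ?thesis using split[of "\<lambda>l. q (face_index i l)" "2 * r" "2 * r"] by (simp add: sum_negf)
qed

lemma coprime_face_step: "coprime (4 * r) (2 * r + 1)"
proof -
  have "coprime (2 * r + 1) (2 * r)" using coprime_Suc_left_nat[of "2 * r"] by simp
  moreover have "coprime (2 * r + 1) (2 :: nat)" by (simp add: coprime_commute)
  ultimately have "coprime (2 * r + 1) (2 * (2 * r))" using coprime_mult_right_iff by blast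
  then show ?thesis by (simp add: coprime_commute)
qed

lemma face_index_inj:
  assumes "j < 4 * r" "j' < 4 * r" "face_index i j = face_index i j'"
  shows "j = j'"
proof -
  have "j = j'" if "j \<le> j'" "j' < 4 * r" "face_index i j = face_index i j'" for j j'
  proof -
    have "4 * r dvd (i + j' * (2 * r + 1)) - (i + j * (2 * r + 1))"
      using that unfolding face_index_def
      by (subst mod_eq_dvd_iff_nat[symmetric]) (auto intro: add_le_mono mult_le_mono)
    also have "(i + j' * (2 * r + 1)) - (i + j * (2 * r + 1)) = (j' - j) * (2 * r + 1)"
      by (simp only: add_diff_cancel_left diff_mult_distrib)
    finally have "4 * r dvd j' - j"
      using coprime_dvd_mult_left_iff[OF coprime_face_step] by blast
    then show "j = j'" using that by (auto dest: dvd_imp_le)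
  qed
  from this[of j j'] this[of j' j] assms show ?thesis by linarith
qed

lemma card_face:
  assumes "d \<in> darts UNIV (cayley_adj S)"
  shows "card (forward_orbit (face_perm rotation) d) = 4 * r"
proof -
  let ?p = "face_perm rotation"
  obtain x i where i: "i < 4 * r" and d: "d = (x, x + q i)" using assms by (rule dart_cases)
  have "face_index i (4 * r) = i" using i unfolding face_index_def by (simp only: mod_mult_self2) simp
  then have period: "(?p ^^ (4 * r)) d = d"
    unfolding d face_perm_funpow[OF i] sum_face_index by simp
  have "forward_orbit ?p d = (\<lambda>j. (?p ^^ j) d) ` {..<4 * r}"
  proof (intro equalityI subsetI)
    fix e assume "e \<in> forward_orbit ?p d"
    then obtain k where "e = (?p ^^ k) d" unfolding forward_orbit_def by blast
    then have "e = (?p ^^ (k mod (4 * r))) d" using funpow_mod_eq[where f = ?p, OF period] by simp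
    moreover have "k mod (4 * r) < 4 * r" using r_pos by simp
    ultimately show "e \<in> (\<lambda>j. (?p ^^ j) d) ` {..<4 * r}" by blast
  qed (auto simp: forward_orbit_def)
  moreover have "inj_on (\<lambda>j. (?p ^^ j) d) {..<4 * r}"
  proof (rule inj_onI)
    fix j j' assume j: "j \<in> {..<4 * r}" "j' \<in> {..<4 * r}" and "(?p ^^ j) d = (?p ^^ j') d"
    then have "q (face_index i j) = q (face_index i j')"
      unfolding d face_perm_funpow[OF i] by (metis prod.inject add_left_cancel)
    then show "j = j'" using j face_index_inj q_inj face_index_less by blast
  qed
  ultimately show ?thesis by (simp add: card_image)
qed

lemma uminus_mem: assumes "s \<in> S" shows "- s \<in> S"
proof -
  have "- s = q ((index s + 2 * r) mod (4 * r))" using q_index[OF assms] uminus_q by metis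
  moreover have "(index s + 2 * r) mod (4 * r) < 4 * r" using r_pos by simp
  ultimately show ?thesis using q_in by simp
qed

lemma uminus_neq: assumes "s \<in> S" shows "- s \<noteq> s"
proof -
  obtain i where i: "i < 4 * r" "s = q i" using q_index[OF assms] by metis
  have "(i + 2 * r) mod (4 * r) \<noteq> i" "(i + 2 * r) mod (4 * r) < 4 * r"
    using i(1) r_pos by (auto simp: mod_if)
  then show ?thesis using i uminus_q q_inj by metis
qed

lemma zero_notin: "0 \<notin> S"
  using uminus_neq by fastforce

lemma cayley_adj_sym: "cayley_adj S x y \<Longrightarrow> cayley_adj S y x"
  unfolding cayley_adj_def using uminus_mem by (metis minus_diff_eq)

lemma cayley_irrefl: "\<not> cayley_adj S v v"
  using zero_notin unfolding cayley_adj_def by simp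

lemma card_faces_rotation: "card (faces UNIV (cayley_adj S) rotation) = card (UNIV :: 'a set)"
proof -
  interpret embedded_graph UNIV "cayley_adj S" rotation
    using cayley_adj_sym cayley_irrefl rotation_system by unfold_locales simp_all
  have "4 * r * card (faces UNIV (cayley_adj S) rotation) = card (darts UNIV (cayley_adj S))"
    unfolding faces_eq_forward_orbits by (rule face_orbits.card_forward_orbits_eq) (rule card_face)
  also have "\<dots> = card (UNIV :: 'a set) * (4 * r)" by (simp add: card_darts_cayley card_S)
  finally show ?thesis using r_pos by simp
qed

lemma cayley_no_pendant:
  assumes "(v, u) \<in> darts UNIV (cayley_adj S)"
  shows "\<exists>u'. u' \<noteq> u \<and> (v, u') \<in> darts UNIV (cayley_adj S)"
proof -
  have "u - v \<in> S" using assms by simp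
  then have "- (u - v) \<in> S" "- (u - v) \<noteq> u - v" by (rule uminus_mem, rule uminus_neq)
  then have "(v, v + - (u - v)) \<in> darts UNIV (cayley_adj S)" "v + - (u - v) \<noteq> u"
    by (simp, metis add_diff_cancel_left')
  then show ?thesis by blast
qed

lemma num_edges_cayley: "num_edges UNIV (cayley_adj S) = card (UNIV :: 'a set) * (2 * r)"
  using two_mul_num_edges[of UNIV "cayley_adj S", OF finite_UNIV cayley_adj_sym cayley_irrefl]
  by (simp add: card_darts_cayley card_S)

lemma cayley_no_isolated: "{v \<in> UNIV. \<forall>w\<in>UNIV. \<not> cayley_adj S v w} = {}"
proof -
  have "cayley_adj S v (v + q 0)" for v using q_in[of 0] r_pos unfolding cayley_adj_def by simp
  then show ?thesis by blast
qed

lemma int_mult_r_minus_1: "int (m * (r - 1)) = int m * int r - int m"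
  using r_pos by (simp add: of_nat_diff right_diff_distrib)

lemma double_genus_rotation:
  "double_genus UNIV (cayley_adj S) rotation =
    2 * int (card (components UNIV (cayley_adj S)) + card (UNIV :: 'a set) * (r - 1))"
  unfolding double_genus_def num_edges_cayley card_faces_rotation cayley_no_isolated
  using int_mult_r_minus_1[of "card (UNIV :: 'a set)"] by simp

lemma double_genus_ge:
  assumes no_zero_sum: "\<And>a b c. a \<in> S \<Longrightarrow> b \<in> S \<Longrightarrow> c \<in> S \<Longrightarrow> a + b + c \<noteq> 0"
    and "rotation_system UNIV (cayley_adj S) \<sigma>"
  shows "2 * int (card (components UNIV (cayley_adj S))) + int (card (UNIV :: 'a set) * (r - 1))
    \<le> double_genus UNIV (cayley_adj S) \<sigma>"
proof -
  let ?D = "darts UNIV (cayley_adj S)" and ?V = "card (UNIV :: 'a set)"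
  interpret embedded_graph UNIV "cayley_adj S" \<sigma>
    using cayley_adj_sym cayley_irrefl assms(2) by unfold_locales simp_all
  have "(w, u) \<notin> ?D" if "(u, v) \<in> ?D" "(v, w) \<in> ?D" for u v w
    using that no_zero_sum[of "v - u" "w - v" "u - w"] by auto
  then have "4 * card (faces UNIV (cayley_adj S) \<sigma>) \<le> card ?D"
    using four_mul_card_faces_le cayley_no_pendant by blast
  then have "card (faces UNIV (cayley_adj S) \<sigma>) \<le> ?V * r" by (simp add: card_darts_cayley card_S)
  then have "int (card (faces UNIV (cayley_adj S) \<sigma>)) \<le> int ?V * int r" by (simp flip: of_nat_mult)
  then show ?thesis
    unfolding double_genus_def num_edges_cayley cayley_no_isolated
    using int_mult_r_minus_1[of ?V] by (simp add: mult.commute)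
qed

theorem graph_genus_eq_1_iff:
  assumes "\<And>a b c. a \<in> S \<Longrightarrow> b \<in> S \<Longrightarrow> c \<in> S \<Longrightarrow> a + b + c \<noteq> 0"
  shows "graph_genus UNIV (cayley_adj S) = 1 \<longleftrightarrow> graph_connected UNIV (cayley_adj S) \<and> r = 1"
proof -
  define c where "c = card (components UNIV (cayley_adj S))"
  define V where "V = card (UNIV :: 'a set)"
  have "1 \<le> c" unfolding c_def using card_components_pos[of "UNIV :: 'a set"] by (simp add: Suc_le_eq)
  have "0 < V" unfolding V_def by (simp add: card_gt_0_iff)
  have upper: "graph_genus UNIV (cayley_adj S) \<le> c + V * (r - 1)"
    using rotation_system double_genus_rotation unfolding c_def V_def by (rule graph_genus_le)
  have lower: "2 * int c + int (V * (r - 1)) \<le> 2 * int (graph_genus UNIV (cayley_adj S))"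
    using graph_genus_ge[OF rotation_system double_genus_rotation double_genus_ge[OF assms]]
    unfolding c_def V_def .
  have connected: "c = 1 \<longleftrightarrow> graph_connected UNIV (cayley_adj S)"
    unfolding c_def by (rule card_components_eq_1_iff)
  show ?thesis
  proof
    assume "graph_genus UNIV (cayley_adj S) = 1"
    then have "c = 1" "V * (r - 1) = 0" using lower \<open>1 \<le> c\<close> by linarith+
    then show "graph_connected UNIV (cayley_adj S) \<and> r = 1" using connected \<open>0 < V\<close> r_pos by simp
  next
    assume "graph_connected UNIV (cayley_adj S) \<and> r = 1"
    then show "graph_genus UNIV (cayley_adj S) = 1" using connected upper lower by simp
  qed
qed

end

section \<open>Involutions in rings of characteristic 2^n\<close>

lemma int_square_eq_1_mod_two_power:
  fixes k :: int
  assumes "2 \<le> n" and "2 ^ n dvd k\<^sup>2 - 1"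
  shows "2 ^ (n - 1) dvd k - 1 \<or> 2 ^ (n - 1) dvd k + 1"
proof -
  obtain m where n: "n = m + 2" using assms(1) by (metis le_add_diff_inverse2)
  have "(2::int) dvd 2 ^ n" unfolding n by simp
  then have "even (k\<^sup>2 - 1)" using assms(2) by (rule dvd_trans)
  then have "odd k" by simp
  then obtain a where a: "k = 2 * a + 1" by (rule oddE)
  have "4 * 2 ^ m dvd 4 * (a * (a + 1))"
    using assms(2) unfolding n a by (simp add: power2_eq_square power_add algebra_simps)
  then have "2 ^ m dvd a * (a + 1)" by simp
  then have "2 ^ m dvd a \<or> 2 ^ m dvd a + 1"
    by (cases "even a") (simp_all add: coprime_dvd_mult_left_iff coprime_dvd_mult_right_iff)
  then have "2 * 2 ^ m dvd 2 * a \<or> 2 * 2 ^ m dvd 2 * (a + 1)"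
    using mult_dvd_mono[OF dvd_refl[of 2]] by blast
  moreover have "k - 1 = 2 * a" "k + 1 = 2 * (a + 1)" "(2::int) ^ (n - 1) = 2 * 2 ^ m"
    unfolding a n by simp_all
  ultimately show ?thesis by (simp only:)
qed

definition involutions :: "'a::comm_ring_1 set" where
  "involutions = {u. u\<^sup>2 = 1}"

lemma inv_cayley_adj_eq_cayley_adj: "inv_cayley_adj = cayley_adj (involutions :: 'a::comm_ring_1 set)"
proof (intro ext)
  fix x y :: 'a
  have "(x - y)\<^sup>2 = (y - x)\<^sup>2" by (metis minus_diff_eq power2_minus)
  then show "inv_cayley_adj x y = cayley_adj involutions x y"
    unfolding inv_cayley_adj_def cayley_adj_def involutions_def by auto
qed

lemma involutions_mult: "u \<in> involutions \<Longrightarrow> v \<in> involutions \<Longrightarrow> u * v \<in> involutions"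
  unfolding involutions_def by (simp add: power_mult_distrib)

lemma uminus_involution: "u \<in> involutions \<Longrightarrow> - u \<in> involutions"
  unfolding involutions_def by simp

lemma sum_of_three_involutions_neq_0:
  fixes a b c :: "'a::comm_ring_1"
  assumes "(2::'a) ^ n = 0" and "a \<in> involutions" "b \<in> involutions" "c \<in> involutions"
  shows "a + b + c \<noteq> 0"
proof
  assume "a + b + c = 0"
  then have "a + b = - c" by (simp add: eq_neg_iff_add_eq_0)
  then have "(a + b)\<^sup>2 = c\<^sup>2" by simp
  then have "1 + (1 + 2 * a * b) = 1 + (0::'a)"
    using assms(2-4) unfolding involutions_def by (simp add: power2_sum add.assoc)
  then have "1 + 2 * a * b = 0" by (rule add_left_imp_eq)
  then have "2 * (- (a * b)) = 1" by (simp add: add_eq_0_iff mult.assoc)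
  then have "(2::'a) ^ n * (- (a * b)) ^ n = 1" by (metis power_mult_distrib power_one)
  with assms(1) show False by simp
qed

lemma two_power_char_eq_0: "CHAR('a::comm_ring_1) = 2 ^ n \<Longrightarrow> (2::'a) ^ n = 0"
  by (metis of_nat_CHAR of_nat_numeral of_nat_power)

lemma involution_one_plus_half_char:
  assumes "3 \<le> n" and char: "CHAR('a::comm_ring_1) = 2 ^ n"
  defines "w \<equiv> 1 + of_nat (2 ^ (n - 1)) :: 'a"
  shows "w \<in> involutions" and "distinct [1, w, -1, -w]"
proof -
  obtain m where n: "n = m + 3" using assms(1) by (metis le_add_diff_inverse2)
  define h :: 'a where "h = of_nat (2 ^ (m + 2))"
  have w: "w = 1 + h" unfolding w_def h_def n by simp
  have zero_iff: "(of_nat k :: 'a) = 0 \<longleftrightarrow> 2 ^ (m + 3) dvd k" for k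
    using char unfolding n by (simp add: of_nat_eq_0_iff_char_dvd)
  have "\<not> (2::nat) ^ (m + 3) dvd 2 ^ (m + 2)" using dvd_power_iff_le[of 2 "m + 3" "m + 2"] by simp
  then have "h \<noteq> 0" unfolding h_def zero_iff .
  have "(2::nat) ^ (m + 3) dvd 2 * 2 ^ (m + 2)" by (simp add: power_add)
  then have "2 * h = 0" using zero_iff[of "2 * 2 ^ (m + 2)"] unfolding h_def by simp
  have hh: "(2::nat) ^ (m + 2) * 2 ^ (m + 2) = 2 ^ (m + 3) * 2 ^ (m + 1)"
    by (simp only: power_add[symmetric]) (rule arg_cong[where f = "(^) 2"], simp)
  have "(2::nat) ^ (m + 3) dvd 2 ^ (m + 2) * 2 ^ (m + 2)" unfolding hh by (rule dvd_triv_left)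
  then have "h * h = 0" using zero_iff[of "2 ^ (m + 2) * 2 ^ (m + 2)"] unfolding h_def by simp
  have "\<not> (2::nat) ^ (m + 3) dvd 2"
    by (auto dest!: dvd_imp_le simp: power_add)
  then have "(2::'a) \<noteq> 0" using zero_iff[of 2] by simp
  have "(1::nat) \<le> 2 ^ m" by simp
  have "2 + 2 ^ (m + 2) < (2::nat) ^ (m + 3)"
    by (simp add: power_add) (use \<open>1 \<le> 2 ^ m\<close> in linarith)
  then have "\<not> (2::nat) ^ (m + 3) dvd 2 + 2 ^ (m + 2)" by (auto dest: dvd_imp_le)
  then have "2 + h \<noteq> 0" using zero_iff[of "2 + 2 ^ (m + 2)"] unfolding h_def by simp
  show "w \<in> involutions"
    using \<open>2 * h = 0\<close> \<open>h * h = 0\<close> unfolding involutions_def w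
    by (simp add: power2_eq_square algebra_simps)
  show "distinct [1, w, -1, -w]"
    using \<open>h \<noteq> 0\<close> \<open>2 * h = 0\<close> \<open>(2::'a) \<noteq> 0\<close> \<open>2 + h \<noteq> 0\<close> unfolding w
    by (auto simp: algebra_simps eq_neg_iff_add_eq_0)
qed

lemma mult_orbit_eq:
  fixes H :: "'a::comm_monoid_mult set"
  assumes H_mult: "\<And>g h. g \<in> H \<Longrightarrow> h \<in> H \<Longrightarrow> g * h \<in> H"
    and H_inv: "\<And>h. h \<in> H \<Longrightarrow> \<exists>g\<in>H. g * h = 1"
    and "y \<in> (\<lambda>h. h * x) ` H"
  shows "(\<lambda>h. h * y) ` H = (\<lambda>h. h * x) ` H"
proof -
  have shrink: "(\<lambda>h. h * (k * z)) ` H \<subseteq> (\<lambda>h. h * z) ` H" if k: "k \<in> H" for k z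
  proof
    fix y assume "y \<in> (\<lambda>h. h * (k * z)) ` H"
    then obtain h where "h \<in> H" "y = (h * k) * z" by (auto simp: mult.assoc)
    then show "y \<in> (\<lambda>h. h * z) ` H" using H_mult[OF _ k] by blast
  qed
  obtain h where h: "h \<in> H" "y = h * x" using assms(3) by blast
  obtain g where g: "g \<in> H" "g * h = 1" using H_inv[OF h(1)] by blast
  have "x = g * y" using h g by (simp add: mult.assoc[symmetric])
  have "(\<lambda>h. h * y) ` H \<subseteq> (\<lambda>h. h * x) ` H" unfolding h(2) by (rule shrink[OF h(1)])
  moreover have "(\<lambda>h. h * x) ` H \<subseteq> (\<lambda>h. h * y) ` H"
    unfolding \<open>x = g * y\<close> by (rule shrink[OF g(1)])
  ultimately show ?thesis by (rule antisym)
qed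

lemma free_action_transversal:
  fixes H S :: "'a::comm_monoid_mult set"
  assumes "1 \<in> H"
    and H_mult: "\<And>g h. g \<in> H \<Longrightarrow> h \<in> H \<Longrightarrow> g * h \<in> H"
    and H_inv: "\<And>h. h \<in> H \<Longrightarrow> \<exists>g\<in>H. g * h = 1"
    and act: "\<And>h x. h \<in> H \<Longrightarrow> x \<in> S \<Longrightarrow> h * x \<in> S"
    and free: "\<And>g h x. g \<in> H \<Longrightarrow> h \<in> H \<Longrightarrow> x \<in> S \<Longrightarrow> g * x = h * x \<Longrightarrow> g = h"
  obtains T where "bij_betw (\<lambda>(h, t). h * t) (H \<times> T) S"
proof -
  define orbit where "orbit x = (\<lambda>h. h * x) ` H" for x
  have same_orbit: "orbit y = orbit x" if "y \<in> orbit x" for x y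
    using mult_orbit_eq[OF H_mult H_inv that[unfolded orbit_def]] unfolding orbit_def .
  have self: "x \<in> orbit x" for x
    unfolding orbit_def using rev_image_eqI[OF \<open>1 \<in> H\<close>, of x "\<lambda>h. h * x"] by simp
  have in_orbit: "h * x \<in> orbit x" if "h \<in> H" for h x unfolding orbit_def using that by blast
  define rep where "rep x = (SOME t. t \<in> orbit x)" for x
  have "rep x \<in> orbit x" for x unfolding rep_def using self by (rule someI)
  then have orbit_rep: "orbit (rep x) = orbit x" for x by (rule same_orbit)
  define T where "T = rep ` S"
  have "T \<subseteq> S"
  proof
    fix t assume "t \<in> T"
    then obtain x where "x \<in> S" "t = rep x" unfolding T_def by blast
    moreover obtain h where "h \<in> H" "rep x = h * x" using \<open>rep x \<in> orbit x\<close> unfolding orbit_def by blast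
    ultimately show "t \<in> S" using act by simp
  qed
  have "inj_on (\<lambda>(h, t). h * t) (H \<times> T)"
  proof (rule inj_onI, clarify)
    fix h h' t t' assume *: "h \<in> H" "h' \<in> H" "t \<in> T" "t' \<in> T" "h * t = h' * t'"
    then obtain x x' where t: "t = rep x" "t' = rep x'" unfolding T_def by blast
    have "orbit x = orbit (h * t)" using same_orbit[OF in_orbit[OF *(1)]] orbit_rep t by simp
    moreover have "orbit x' = orbit (h' * t')" using same_orbit[OF in_orbit[OF *(2)]] orbit_rep t by simp
    ultimately have "orbit x = orbit x'" using *(5) by simp
    then have "t = t'" unfolding t rep_def by simp
    then show "h = h' \<and> t = t'" using free *(1,2,4,5) \<open>T \<subseteq> S\<close> by blast
  qed
  moreover have "(\<lambda>(h, t). h * t) ` (H \<times> T) = S"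
  proof (intro equalityI subsetI)
    fix y assume "y \<in> S"
    then have "rep y \<in> T" "y \<in> orbit (rep y)" unfolding T_def orbit_rep using self by auto
    then obtain h where "h \<in> H" "y = h * rep y" unfolding orbit_def by blast
    then show "y \<in> (\<lambda>(h, t). h * t) ` (H \<times> T)"
      using \<open>rep y \<in> T\<close> by (auto intro: rev_image_eqI[of "(h, rep y)"])
  qed (use \<open>T \<subseteq> S\<close> act in auto)
  ultimately show thesis using that unfolding bij_betw_def by blast
qed

lemma bij_betw_div_mod:
  fixes m r :: nat
  shows "0 < r \<Longrightarrow> bij_betw (\<lambda>i. (i div r, i mod r)) {..<m * r} ({..<m} \<times> {..<r})"
proof (rule bij_betw_byWitness[where f' = "\<lambda>(a, j). a * r + j"])
  assume "0 < r"
  show "(\<lambda>i. (i div r, i mod r)) ` {..<m * r} \<subseteq> {..<m} \<times> {..<r}"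
    using \<open>0 < r\<close> by (auto simp: less_mult_imp_div_less)
  show "(\<lambda>(a, j). a * r + j) ` ({..<m} \<times> {..<r}) \<subseteq> {..<m * r}"
  proof clarify
    fix a j assume "a < m" "j < r"
    have "a * r + j < (a + 1) * r" using \<open>j < r\<close> by simp
    also have "\<dots> \<le> m * r" using \<open>a < m\<close> by (intro mult_le_mono1) simp
    finally show "a * r + j < m * r" .
  qed
qed auto

lemma antipodal_enumeration_of_transversal:
  fixes w :: "'a::{comm_ring_1, finite}"
  assumes "distinct [1, w, -1, -w]" and T: "bij_betw (\<lambda>(h, t). h * t) ({1, w, -1, -w} \<times> T) S"
    and "T \<noteq> {}"
  shows "\<exists>q. antipodal_enumeration S q (card T)"
proof -
  define r where "r = card T"
  define hs where "hs = [1, w, -1, -w]"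
  have "0 < r" unfolding r_def using \<open>T \<noteq> {}\<close> by (simp add: card_gt_0_iff)
  obtain e where e: "bij_betw e {..<r} T"
    using ex_bij_betw_nat_finite[of T] unfolding r_def atLeast0LessThan by auto
  define q where "q i = hs ! (i div r) * e (i mod r)" for i
  have "bij_betw ((\<lambda>(h, t). h * t) \<circ> map_prod ((!) hs) e \<circ> (\<lambda>i. (i div r, i mod r))) {..<4 * r} S"
  proof (intro bij_betw_trans)
    show "bij_betw (\<lambda>i. (i div r, i mod r)) {..<4 * r} ({..<4} \<times> {..<r})"
      using bij_betw_div_mod[OF \<open>0 < r\<close>] .
    show "bij_betw (map_prod ((!) hs) e) ({..<4} \<times> {..<r}) ({1, w, -1, -w} \<times> T)"
      using assms(1) e by (intro bij_betw_map_prod bij_betw_nth) (simp_all add: hs_def)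
  qed (rule T)
  moreover have "q = (\<lambda>(h, t). h * t) \<circ> map_prod ((!) hs) e \<circ> (\<lambda>i. (i div r, i mod r))"
    unfolding q_def by auto
  ultimately have "bij_betw q {..<4 * r} S" by simp
  moreover have "q (i + 2 * r) = - q i" if "i < 2 * r" for i
  proof -
    have "i div r < 2" using that by (simp add: less_mult_imp_div_less)
    then have "hs ! (i div r + 2) = - hs ! (i div r)" unfolding hs_def by (auto simp: less_2_cases_iff)
    then show ?thesis unfolding q_def using \<open>0 < r\<close> by simp
  qed
  ultimately have "antipodal_enumeration S q r"
    using \<open>0 < r\<close> by (simp add: antipodal_enumeration_def)
  then show ?thesis unfolding r_def by blast
qed

lemma involutions_transversal:
  assumes "3 \<le> n" and "CHAR('a::comm_ring_1) = 2 ^ n"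
  defines "w \<equiv> 1 + of_nat (2 ^ (n - 1)) :: 'a"
  obtains T where "bij_betw (\<lambda>(h, t). h * t) ({1, w, -1, -w} \<times> T) involutions"
proof (rule free_action_transversal)
  have "w \<in> involutions" unfolding w_def by (rule involution_one_plus_half_char(1)[OF assms(1,2)])
  then have H: "{1, w, -1, -w} \<subseteq> involutions" using uminus_involution unfolding involutions_def by auto
  have self_inverse: "h * h = 1" if "h \<in> involutions" for h :: 'a
    using that unfolding involutions_def by (simp add: power2_eq_square)
  show "g * h \<in> {1, w, -1, -w}" if "g \<in> {1, w, -1, -w}" "h \<in> {1, w, -1, -w}" for g h
    using that self_inverse[OF \<open>w \<in> involutions\<close>] by (auto simp: mult.commute)
  show "\<exists>g\<in>{1, w, -1, -w}. g * h = 1" if "h \<in> {1, w, -1, -w}" for h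
    using that H self_inverse by blast
  show "h * x \<in> involutions" if "h \<in> {1, w, -1, -w}" "x \<in> involutions" for h x
    using that H involutions_mult by blast
  show "g = h" if "x \<in> involutions" "g * x = h * x" for g h x :: 'a
  proof -
    have "g * (x * x) = h * (x * x)" using that(2) by (simp flip: mult.assoc)
    then show ?thesis using self_inverse[OF that(1)] by simp
  qed
qed simp_all

lemma involutions_antipodal_enumeration:
  assumes "3 \<le> n" and "CHAR('a::{comm_ring_1, finite}) = 2 ^ n"
  obtains q r where "antipodal_enumeration (involutions :: 'a set) q r"
proof -
  define w :: 'a where "w = 1 + of_nat (2 ^ (n - 1))"
  obtain T where T: "bij_betw (\<lambda>(h, t). h * t) ({1, w, -1, -w} \<times> T) involutions"
    using involutions_transversal[OF assms, folded w_def] .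
  have "1 \<in> (involutions :: 'a set)" unfolding involutions_def by simp
  then have "T \<noteq> {}" using T unfolding bij_betw_def by auto
  then obtain q where "antipodal_enumeration (involutions :: 'a set) q (card T)"
    using antipodal_enumeration_of_transversal[OF involution_one_plus_half_char(2)[OF assms, folded w_def] T]
    by blast
  then show thesis by (rule that)
qed

lemma involutions_eq_if_of_int_surj:
  assumes "3 \<le> n" and char: "CHAR('a::comm_ring_1) = 2 ^ n" and surj: "surj (of_int :: int \<Rightarrow> 'a)"
  defines "w \<equiv> 1 + of_nat (2 ^ (n - 1)) :: 'a"
  shows "involutions = {1, w, -1, -w}"
proof
  define h :: 'a where "h = of_nat (2 ^ (n - 1))"
  have "2 * 2 ^ (n - 1) = (2::nat) ^ n" using \<open>3 \<le> n\<close> by (simp flip: power_Suc)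
  then have "2 * h = 0" unfolding h_def using char by (metis of_nat_CHAR of_nat_mult of_nat_numeral)
  have h_mult: "h * of_int t \<in> {0, h}" for t
  proof -
    have "h * of_int t = h * of_int (t mod 2) + (2 * h) * of_int (t div 2)"
      by (metis (no_types, lifting) distrib_left mult.left_commute mult.commute of_int_add of_int_mult
          of_int_numeral mod_mult_div_eq add.commute)
    moreover have "t mod 2 = 0 \<or> t mod 2 = 1" by presburger
    ultimately show ?thesis using \<open>2 * h = 0\<close> by auto
  qed
  show "involutions \<subseteq> {1, w, -1, -w}"
  proof
    fix u :: 'a assume "u \<in> involutions"
    obtain k where u: "u = of_int k" using surj by (metis surjD)
    have "(of_int (k\<^sup>2 - 1) :: 'a) = 0" using \<open>u \<in> involutions\<close> unfolding u involutions_def by simp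
    then have "int CHAR('a) dvd k\<^sup>2 - 1" by (simp only: of_int_eq_0_iff_char_dvd)
    then have "2 ^ n dvd k\<^sup>2 - 1" using char by simp
    then have "2 ^ (n - 1) dvd k - 1 \<or> 2 ^ (n - 1) dvd k + 1"
      using \<open>3 \<le> n\<close> by (intro int_square_eq_1_mod_two_power) simp_all
    then obtain t where "k = 1 + 2 ^ (n - 1) * t \<or> k = -1 + 2 ^ (n - 1) * t"
      by (metis dvdE diff_add_cancel add.commute eq_diff_eq minus_add_cancel)
    then have "u = 1 + h * of_int t \<or> u = -1 + h * of_int t" unfolding u h_def by auto
    moreover have "-1 + h = - w" unfolding w_def h_def[symmetric] using \<open>2 * h = 0\<close>
      by (simp add: algebra_simps eq_neg_iff_add_eq_0 mult_2[symmetric])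
    ultimately show "u \<in> {1, w, -1, -w}" using h_mult[of t] unfolding w_def h_def[symmetric] by auto
  qed
  have "w \<in> involutions" unfolding w_def by (rule involution_one_plus_half_char(1)[OF assms(1,2)])
  then show "{1, w, -1, -w} \<subseteq> involutions"
    using uminus_involution unfolding involutions_def by auto
qed

lemma iso_to_Zmod_imp_of_int_surj:
  assumes "iso_to_Zmod TYPE('a::comm_ring_1) m"
  shows "surj (of_int :: int \<Rightarrow> 'a)"
proof -
  obtain f :: "'a \<Rightarrow> int" where bij: "bij_betw f UNIV {0..<m}"
    and add: "\<And>x y. f (x + y) = (f x + f y) mod m" and one: "f 1 = 1 mod m"
    using assms unfolding iso_to_Zmod_def by blast
  have f_of_nat: "f (of_nat (Suc k)) = int (Suc k) mod m" for k
  proof (induction k)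
    case (Suc k)
    have "(of_nat (Suc (Suc k)) :: 'a) = of_nat (Suc k) + 1" by (simp only: of_nat_Suc add.commute)
    then have "f (of_nat (Suc (Suc k))) = (f (of_nat (Suc k)) + f 1) mod m" by (simp only: add)
    also have "\<dots> = (int (Suc k) mod m + 1 mod m) mod m" by (simp only: Suc.IH one)
    also have "\<dots> = int (Suc (Suc k)) mod m" by (simp add: mod_add_eq)
    finally show ?case .
  qed (simp add: one)
  have "\<exists>j. x = of_int j" for x :: 'a
  proof -
    have "0 \<le> f x" "f x < m" using bij unfolding bij_betw_def by auto
    define K where "K = nat (f x + m)"
    have K: "int K = f x + m" unfolding K_def using \<open>0 \<le> f x\<close> \<open>f x < m\<close> by simp
    moreover have "0 < int K" using K \<open>0 \<le> f x\<close> \<open>f x < m\<close> by linarith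
    then obtain K' where "K = Suc K'" using gr0_implies_Suc by auto
    ultimately have "f (of_nat K) = f x" using f_of_nat[of K'] \<open>0 \<le> f x\<close> \<open>f x < m\<close> by simp
    then have "of_nat K = x" using bij unfolding bij_betw_def inj_on_def by blast
    then show ?thesis by (metis of_int_of_nat_eq)
  qed
  then show ?thesis unfolding surj_def by blast
qed

lemma of_int_surj_imp_iso_to_Zmod:
  assumes char: "CHAR('a::comm_ring_1) = m" and "0 < m" and surj: "surj (of_int :: int \<Rightarrow> 'a)"
  shows "iso_to_Zmod TYPE('a) (int m)"
proof -
  have eq_iff: "(of_int a :: 'a) = of_int b \<longleftrightarrow> a mod int m = b mod int m" for a b
  proof -
    have "(of_int a :: 'a) = of_int b \<longleftrightarrow> (of_int (a - b) :: 'a) = 0" by simp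
    also have "\<dots> \<longleftrightarrow> a mod int m = b mod int m"
      unfolding of_int_eq_0_iff_char_dvd char by (simp add: mod_eq_dvd_iff)
    finally show ?thesis .
  qed
  define f where "f x = (SOME j. x = of_int j) mod int m" for x :: 'a
  have of_int_f: "of_int (f x) = x" for x
  proof -
    have "x = of_int (SOME j. x = (of_int j :: 'a))" using surj by (metis (mono_tags) someI surjD)
    then show ?thesis unfolding f_def by (metis eq_iff mod_mod_trivial)
  qed
  have f_range: "0 \<le> f x \<and> f x < int m" for x unfolding f_def using \<open>0 < m\<close> by simp
  have f_of_int: "f (of_int j) = j mod int m" for j
    using eq_iff[of "f (of_int j)" j] of_int_f f_range[of "of_int j"] by simp
  have "bij_betw f UNIV {0..<int m}"
  proof (rule bij_betw_byWitness[where f' = of_int])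
    show "f ` UNIV \<subseteq> {0..<int m}" using f_range by auto
  qed (use of_int_f f_of_int in auto)
  moreover have "f (x + y) = (f x + f y) mod int m" for x y
    using f_of_int[of "f x + f y"] of_int_f by (metis of_int_add)
  moreover have "f (x * y) = (f x * f y) mod int m" for x y
    using f_of_int[of "f x * f y"] of_int_f by (metis of_int_mult)
  moreover have "f 1 = 1 mod int m" using f_of_int[of 1] by simp
  ultimately show ?thesis unfolding iso_to_Zmod_def by blast
qed

lemma involutions_connected_card_4_iff:
  assumes "3 \<le> n" and char: "CHAR('a::{comm_ring_1, finite}) = 2 ^ n"
  shows "graph_connected UNIV (cayley_adj (involutions :: 'a set)) \<and> card (involutions :: 'a set) = 4
    \<longleftrightarrow> surj (of_int :: int \<Rightarrow> 'a)"
proof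
  define w :: 'a where "w = 1 + of_nat (2 ^ (n - 1))"
  have "w \<in> involutions" and card_4: "card {1, w, -1, -w} = 4"
    using involution_one_plus_half_char[OF assms, folded w_def] by (auto simp: distinct_card[symmetric])
  then have sub: "{1, w, -1, -w} \<subseteq> involutions"
    using uminus_involution unfolding involutions_def by auto
  {
    assume "graph_connected UNIV (cayley_adj (involutions :: 'a set)) \<and> card (involutions :: 'a set) = 4"
    then have conn: "graph_connected UNIV (cayley_adj (involutions :: 'a set))"
      and "{1, w, -1, -w} = involutions" using card_subset_eq[OF finite sub] card_4 by simp_all
    moreover have "w = of_int (1 + 2 ^ (n - 1))" unfolding w_def by simp
    ultimately have "involutions \<subseteq> range (of_int :: int \<Rightarrow> 'a)"
      by (metis insert_subsetI empty_subsetI rangeI of_int_1 of_int_minus)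
    then show "surj (of_int :: int \<Rightarrow> 'a)"
      using cayley_connected_subgroup[OF conn, of "range of_int"]
      by (metis (mono_tags) UNIV_eq_I of_int_0 of_int_add rangeE rangeI)
  }
  assume surj: "surj (of_int :: int \<Rightarrow> 'a)"
  then have "involutions = {1, w, -1, -w}" unfolding w_def by (rule involutions_eq_if_of_int_surj[OF assms])
  moreover have "(-1 :: 'a) \<in> involutions" "(1 :: 'a) \<in> involutions" unfolding involutions_def by simp_all
  ultimately show "graph_connected UNIV (cayley_adj (involutions :: 'a set)) \<and> card (involutions :: 'a set) = 4"
    using cayley_connected_if_of_int_surj[OF surj] card_4 by simp
qed

theorem mainTheorem6:
  fixes n :: nat
  assumes "local_ring TYPE('a::{comm_ring_1, finite})"
    and "n \<ge> 3"
    and "CHAR('a) = 2 ^ n"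
  shows "(graph_genus (UNIV :: 'a set) inv_cayley_adj = 1
            \<longleftrightarrow> graph_connected (UNIV :: 'a set) inv_cayley_adj
                \<and> regular (UNIV :: 'a set) inv_cayley_adj 4)
       \<and> (graph_connected (UNIV :: 'a set) inv_cayley_adj
                \<and> regular (UNIV :: 'a set) inv_cayley_adj 4
            \<longleftrightarrow> iso_to_Zmod TYPE('a) (2 ^ n))"
proof -
  obtain q r where enum: "antipodal_enumeration (involutions :: 'a set) q r"
    using involutions_antipodal_enumeration[OF assms(2,3)] .
  have "card (involutions :: 'a set) = 4 * r" by (rule antipodal_enumeration.card_S[OF enum])
  then have regular: "regular (UNIV :: 'a set) inv_cayley_adj 4 \<longleftrightarrow> r = 1"
    unfolding inv_cayley_adj_eq_cayley_adj regular_cayley_iff by simp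
  have "graph_genus (UNIV :: 'a set) inv_cayley_adj = 1
      \<longleftrightarrow> graph_connected (UNIV :: 'a set) inv_cayley_adj \<and> r = 1"
    unfolding inv_cayley_adj_eq_cayley_adj
    using antipodal_enumeration.graph_genus_eq_1_iff[OF enum]
      sum_of_three_involutions_neq_0[OF two_power_char_eq_0[OF assms(3)]] by blast
  moreover have "iso_to_Zmod TYPE('a) (2 ^ n) \<longleftrightarrow> surj (of_int :: int \<Rightarrow> 'a)"
    using iso_to_Zmod_imp_of_int_surj of_int_surj_imp_iso_to_Zmod[OF assms(3)] by fastforce
  ultimately show ?thesis
    using regular involutions_connected_card_4_iff[OF assms(2,3)] \<open>card involutions = 4 * r\<close>
    unfolding inv_cayley_adj_eq_cayley_adj by auto
qed

end
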